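(* Let $\mathbf{x}$ be a parking function of length $n$ and run Algorithm A on $\mathbf{x}$. The algorithm terminates, every index $j\in[n]$ is the up feeder of exactly one up step, and the source priority vector $s(\mathbf{x})$ is a permutation of $(-1,-2,\dots,-n)$; moreover, for $i\ne j$, $|s_i(\mathbf{x})|>|s_j(\mathbf{x})|$ if and only if $i$ was the up feeder of an up step occurring before the up step with up feeder $j$.
   Context: A parking function of length $n$ is a sequence of positive integers which, sorted increasingly as $x_{(1)}\le\dots\le x_{(n)}$, satisfies $x_{(k)}\le k$ for all $k$. Algorithm A: Input a parking function $\mathbf{x}\in\mathbb{Z}_{>0}^n$; start with the vertex set $[n]$ and no edges, and set $\mathbf{y}:=\mathbf{x}-(1,\dots,1)$. Repeat the following. (Up step) If some $y_k=0$: let $j:=\max\{k: y_k=0\}$ (the up feeder); for every $k>j$ with $y_k>0$, introduce the directed (up) edge $j\rightarrow k$ and replace $y_k$ by $y_k-1$; replace every entry that was negative at the start of this step by that entry minus $1$; set $y_j:=-1$; repeat. (Down step) Else, if some $y_k>0$: among all indices $j$ such that there is $k<j$ with $y_k>0$ and the edge $k\leftarrow j$ not yet introduced (down feeder candidates), choose $j$ with minimal $y_j$ (the down feeder); for every $k<j$ with $y_k>0$, introduce the directed (down) edge $k\leftarrow j$ (directed from $j$ to $k$) and replace $y_k$ by $y_k-1$; repeat. (Stop) Else (all $y_k<0$): join every pair of vertices not yet joined by an undirected (downish) edge and stop. Output: the mixed graph $P(\mathbf{x})$ and the source priority vector $s(\mathbf{x}):=(y_1,\dots,y_n)$ (final values).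 *)

theory Defs
  imports Main
begin

definition parking_function :: "nat list \<Rightarrow> bool" where
  "parking_function xs \<longleftrightarrow>
     (\<forall>i<length xs. 0 < xs ! i) \<and> (\<forall>i<length xs. sort xs ! i \<le> i + 1)"

text \<open>Step labels: the feeder of an up step / down step.\<close>
datatype lbl = Up nat | Down nat

text \<open>State of Algorithm A on vertex set {1..n}: the vector y (indices 1..n),
the up edges introduced (pairs (j,k) for j -> k), and the down edges introduced
(pairs (j,k) for the edge k <- j, directed from j to k).\<close>
record st =
  yv :: "nat \<Rightarrow> int"
  upE :: "(nat \<times> nat) set"
  downE :: "(nat \<times> nat) set"

definition init_st :: "nat list \<Rightarrow> st" where
  "init_st xs = \<lparr> yv = (\<lambda>k. if 1 \<le> k \<and> k \<le> length xs then int (xs ! (k - 1)) - 1 else 0),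
                 upE = {}, downE = {} \<rparr>"

definition up_upd :: "nat \<Rightarrow> (nat \<Rightarrow> int) \<Rightarrow> nat \<Rightarrow> nat \<Rightarrow> int" where
  "up_upd n y j = (\<lambda>k. if k = j then -1
      else if 1 \<le> k \<and> k \<le> n \<and> j < k \<and> 0 < y k then y k - 1
      else if 1 \<le> k \<and> k \<le> n \<and> y k < 0 then y k - 1
      else y k)"

definition down_upd :: "nat \<Rightarrow> (nat \<Rightarrow> int) \<Rightarrow> nat \<Rightarrow> nat \<Rightarrow> int" where
  "down_upd n y j = (\<lambda>k. if 1 \<le> k \<and> k < j \<and> 0 < y k then y k - 1 else y k)"

definition dcand :: "nat \<Rightarrow> (nat \<Rightarrow> int) \<Rightarrow> (nat \<times> nat) set \<Rightarrow> nat set" where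
  "dcand n y D = {j \<in> {1..n}. \<exists>k. 1 \<le> k \<and> k < j \<and> 0 < y k \<and> (j, k) \<notin> D}"

text \<open>One step of Algorithm A (nondeterministic only in the choice among
down feeder candidates of minimal y-value).\<close>
inductive astep :: "nat \<Rightarrow> st \<Rightarrow> lbl \<Rightarrow> st \<Rightarrow> bool" for n where
  up: "\<exists>k\<in>{1..n}. yv \<sigma> k = 0 \<Longrightarrow> j = Max {k \<in> {1..n}. yv \<sigma> k = 0} \<Longrightarrow>
       astep n \<sigma> (Up j)
         \<lparr> yv = up_upd n (yv \<sigma>) j,
           upE = upE \<sigma> \<union> {(j, k) | k. j < k \<and> k \<le> n \<and> 0 < yv \<sigma> k},
           downE = downE \<sigma> \<rparr>"
| down: "\<not> (\<exists>k\<in>{1..n}. yv \<sigma> k = 0) \<Longrightarrow> \<exists>k\<in>{1..n}. 0 < yv \<sigma> k \<Longrightarrow>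
       j \<in> dcand n (yv \<sigma>) (downE \<sigma>) \<Longrightarrow>
       (\<forall>j' \<in> dcand n (yv \<sigma>) (downE \<sigma>). yv \<sigma> j \<le> yv \<sigma> j') \<Longrightarrow>
       astep n \<sigma> (Down j)
         \<lparr> yv = down_upd n (yv \<sigma>) j,
           upE = upE \<sigma>,
           downE = downE \<sigma> \<union> {(j, k) | k. 1 \<le> k \<and> k < j \<and> 0 < yv \<sigma> k} \<rparr>"

definition stopped :: "nat \<Rightarrow> st \<Rightarrow> bool" where
  "stopped n \<sigma> \<longleftrightarrow> (\<forall>k\<in>{1..n}. yv \<sigma> k < 0)"

inductive steps :: "nat \<Rightarrow> st \<Rightarrow> lbl list \<Rightarrow> st \<Rightarrow> bool" for n where
  nil: "steps n \<sigma> [] \<sigma>"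
| cons: "astep n \<sigma> l \<sigma>' \<Longrightarrow> steps n \<sigma>' ls \<sigma>'' \<Longrightarrow> steps n \<sigma> (l # ls) \<sigma>''"

end

theory Submission
  imports Defs
begin

text \<open>
Two invariants carry the argument. The first bounds each positive entry \<open>y\<^sub>k\<close>
by the number of opportunities left to decrease it: down feeders \<open>j > k\<close> that have
not yet fed \<open>k\<close>, and indices \<open>i < k\<close> that may still become up feeders. For a parking
function it holds initially (\<open>x\<^sub>k \<le> n\<close>), and it guarantees a down feeder candidate
whenever there is no zero but some positive entry, so the algorithm only stops
with all entries negative. Every step removes a nonnegative entry or adds a down
edge, which gives termination.

The second invariant describes the trace: the negative entries are exactly the
earlier up feeders, each occurring once, and an up feeder's entry is minus the
number of up steps from its own one onwards, since it is set to \<open>-1\<close> and then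
decremented by every later up step. At the end all \<open>n\<close> indices have been up feeders,
so the final vector lists \<open>-1, \<dots>, -n\<close> in reverse order of the up steps.
\<close>

subsection \<open>The two update rules\<close>

lemma up_feeder_zero:
  fixes n :: nat
  assumes "\<exists>k\<in>{1..n}. y k = (0::int)"
  shows "Max {k \<in> {1..n}. y k = 0} \<in> {k \<in> {1..n}. y k = 0}"
proof (rule Max_in)
  show "finite {k \<in> {1..n}. y k = 0}" by (rule finite_subset[of _ "{1..n}"]) auto
qed (use assms in auto)

lemma up_upd_feeder: "up_upd n y j j = -1"
  by (simp add: up_upd_def)

lemma up_upd_pos:
  assumes "k \<in> {1..n}" "0 < up_upd n y j k"
  shows "0 < y k \<and> up_upd n y j k = y k - (if j < k then 1 else 0)"
  using assms by (auto simp: up_upd_def split: if_splits)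

lemma up_upd_nonneg_iff: "0 \<le> up_upd n y j i \<longleftrightarrow> i \<noteq> j \<and> 0 \<le> y i"
  by (auto simp: up_upd_def)

lemma up_upd_neg: "i \<in> {1..n} \<Longrightarrow> i \<noteq> j \<Longrightarrow> y i < 0 \<Longrightarrow> up_upd n y j i = y i - 1"
  by (auto simp: up_upd_def)

lemma down_upd_pos:
  assumes "0 < down_upd n y j k"
  shows "0 < y k \<and> down_upd n y j k = y k - (if 1 \<le> k \<and> k < j then 1 else 0)"
  using assms by (auto simp: down_upd_def split: if_splits)

lemma down_upd_nonneg_iff: "0 \<le> down_upd n y j i \<longleftrightarrow> 0 \<le> y i"
  by (auto simp: down_upd_def)

lemma down_upd_neg: "y i < 0 \<Longrightarrow> down_upd n y j i = y i"
  by (auto simp: down_upd_def)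

subsection \<open>Termination and progress\<close>

definition slack_invariant :: "nat \<Rightarrow> st \<Rightarrow> bool" where
  "slack_invariant n \<sigma> \<longleftrightarrow> downE \<sigma> \<subseteq> {1..n} \<times> {1..n} \<and>
     (\<forall>k\<in>{1..n}. 0 < yv \<sigma> k \<longrightarrow>
        yv \<sigma> k + int (card {j\<in>{k<..n}. (j, k) \<in> downE \<sigma>})
          \<le> int (n - k) + int (card {i\<in>{1..<k}. 0 \<le> yv \<sigma> i}))"

definition progress_measure :: "nat \<Rightarrow> st \<Rightarrow> nat" where
  "progress_measure n \<sigma> = card {k\<in>{1..n}. 0 \<le> yv \<sigma> k} + (n * n - card (downE \<sigma>))"

lemma parking_function_entry_bounds:
  assumes "parking_function xs" "i < length xs"
  shows "0 < xs ! i" "xs ! i \<le> length xs"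
proof -
  show "0 < xs ! i" using assms unfolding parking_function_def by blast
  have "xs ! i \<in> set (sort xs)" using assms(2) by simp
  then obtain m where m: "m < length (sort xs)" "sort xs ! m = xs ! i"
    by (metis in_set_conv_nth)
  have "sort xs ! m \<le> m + 1" using assms(1) m(1) unfolding parking_function_def by simp
  then show "xs ! i \<le> length xs" using m by simp
qed

lemma slack_invariant_init:
  assumes "parking_function xs"
  shows "slack_invariant (length xs) (init_st xs)"
  unfolding slack_invariant_def
proof (intro conjI ballI impI)
  show "downE (init_st xs) \<subseteq> {1..length xs} \<times> {1..length xs}" by (simp add: init_st_def)
next
  fix k assume k: "k \<in> {1..length xs}"
  have "{i\<in>{1..<k}. 0 \<le> yv (init_st xs) i} = {1..<k}"
    using k parking_function_entry_bounds(1)[OF assms] by (auto simp: init_st_def)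
  moreover have "xs ! (k - 1) \<le> length xs"
    using k parking_function_entry_bounds(2)[OF assms, of "k - 1"] by auto
  ultimately show "yv (init_st xs) k + int (card {j\<in>{k<..length xs}. (j, k) \<in> downE (init_st xs)})
      \<le> int (length xs - k) + int (card {i\<in>{1..<k}. 0 \<le> yv (init_st xs) i})"
    using k by (simp add: init_st_def)
qed

lemma slack_invariant_up:
  assumes "slack_invariant n \<sigma>" and j: "j \<in> {1..n}" "yv \<sigma> j = 0"
  shows "slack_invariant n \<lparr>yv = up_upd n (yv \<sigma>) j, upE = E, downE = downE \<sigma>\<rparr>"
proof (unfold slack_invariant_def st.select_convs, intro conjI ballI impI)
  show "downE \<sigma> \<subseteq> {1..n} \<times> {1..n}" using assms(1) by (simp add: slack_invariant_def)
next
  let ?y = "yv \<sigma>" and ?y' = "up_upd n (yv \<sigma>) j"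
  fix k assume k: "k \<in> {1..n}" and pos: "0 < ?y' k"
  let ?S = "{i\<in>{1..<k}. 0 \<le> ?y i}" and ?S' = "{i\<in>{1..<k}. 0 \<le> ?y' i}"
  have step: "0 < ?y k" "?y' k = ?y k - (if j < k then 1 else 0)"
    using up_upd_pos[OF k pos] by auto
  have "?S = (if j < k then insert j ?S' else ?S')"
    using j by (auto simp: up_upd_nonneg_iff)
  moreover have "j \<notin> ?S'" by (simp add: up_upd_nonneg_iff)
  ultimately have "int (card ?S) = int (card ?S') + (if j < k then 1 else 0)"
    by simp
  moreover have "?y k + int (card {j\<in>{k<..n}. (j, k) \<in> downE \<sigma>}) \<le> int (n - k) + int (card ?S)"
    using assms(1) k step(1) by (simp add: slack_invariant_def)
  ultimately show "?y' k + int (card {j\<in>{k<..n}. (j, k) \<in> downE \<sigma>}) \<le> int (n - k) + int (card ?S')"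
    using step(2) by simp
qed

lemma slack_invariant_down:
  assumes "slack_invariant n \<sigma>" and j: "j \<in> {1..n}"
  shows "slack_invariant n \<lparr>yv = down_upd n (yv \<sigma>) j, upE = upE \<sigma>,
           downE = downE \<sigma> \<union> {(j, k) | k. 1 \<le> k \<and> k < j \<and> 0 < yv \<sigma> k}\<rparr>"
  (is "slack_invariant n ?\<sigma>'")
  unfolding slack_invariant_def
proof (intro conjI ballI impI)
  show "downE ?\<sigma>' \<subseteq> {1..n} \<times> {1..n}" using assms by (auto simp: slack_invariant_def)
next
  let ?y = "yv \<sigma>"
  fix k assume k: "k \<in> {1..n}" and pos: "0 < yv ?\<sigma>' k"
  let ?C = "{j\<in>{k<..n}. (j, k) \<in> downE \<sigma>}" and ?C' = "{j\<in>{k<..n}. (j, k) \<in> downE ?\<sigma>'}"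
  have step: "0 < ?y k" "yv ?\<sigma>' k = ?y k - (if 1 \<le> k \<and> k < j then 1 else 0)"
    using down_upd_pos[of n ?y j k] pos by auto
  have "int (card ?C') \<le> int (card ?C) + (if 1 \<le> k \<and> k < j then 1 else 0)"
  proof (cases "1 \<le> k \<and> k < j")
    case True
    have "finite ?C" by (rule finite_subset[of _ "{k<..n}"]) auto
    moreover have "card ?C' \<le> card (insert j ?C)" by (intro card_mono) auto
    ultimately show ?thesis using True by (simp add: card_insert_if split: if_splits)
  next
    case False
    then have "?C' = ?C" by auto
    then show ?thesis by simp
  qed
  moreover have "?y k + int (card ?C) \<le> int (n - k) + int (card {i\<in>{1..<k}. 0 \<le> ?y i})"
    using assms(1) k step(1) by (simp add: slack_invariant_def)
  moreover have S: "{i\<in>{1..<k}. 0 \<le> yv ?\<sigma>' i} = {i\<in>{1..<k}. 0 \<le> ?y i}"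
    by (simp add: down_upd_nonneg_iff)
  ultimately show "yv ?\<sigma>' k + int (card ?C') \<le> int (n - k) + int (card {i\<in>{1..<k}. 0 \<le> yv ?\<sigma>' i})"
    unfolding S using step(2) by linarith
qed

lemma astep_slack_invariant:
  assumes "astep n \<sigma> l \<sigma>'" "slack_invariant n \<sigma>"
  shows "slack_invariant n \<sigma>'"
  using assms(1)
proof cases
  case (up j)
  then show ?thesis
    using slack_invariant_up[OF assms(2)] up_feeder_zero[OF up(3), folded up(4)] by simp
next
  case (down j)
  then show ?thesis using slack_invariant_down[OF assms(2)] by (simp add: dcand_def)
qed

lemma steps_slack_invariant:
  "steps n \<sigma> ls \<sigma>' \<Longrightarrow> slack_invariant n \<sigma> \<Longrightarrow> slack_invariant n \<sigma>'"
  by (induction rule: steps.induct) (auto intro: astep_slack_invariant)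

lemma astep_progress_measure_less:
  assumes "astep n \<sigma> l \<sigma>'" "slack_invariant n \<sigma>"
  shows "progress_measure n \<sigma>' < progress_measure n \<sigma>"
  using assms(1)
proof cases
  case (up j)
  let ?N = "{k\<in>{1..n}. 0 \<le> yv \<sigma> k}"
  have "j \<in> ?N" using up_feeder_zero[OF up(3), folded up(4)] by simp
  moreover have "{k\<in>{1..n}. 0 \<le> yv \<sigma>' k} = ?N - {j}"
    using up by (auto simp: up_upd_nonneg_iff)
  ultimately show ?thesis
    using up card_Diff1_less[of ?N j] by (simp add: progress_measure_def)
next
  case (down j)
  obtain k where k: "1 \<le> k" "k < j" "0 < yv \<sigma> k" "(j, k) \<notin> downE \<sigma>"
    using down by (auto simp: dcand_def)
  have sub: "downE \<sigma>' \<subseteq> {1..n} \<times> {1..n}"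
    using astep_slack_invariant[OF assms] by (simp add: slack_invariant_def)
  then have "card (downE \<sigma>') \<le> n * n" using card_mono[OF _ sub] by simp
  moreover have "card (downE \<sigma>) < card (downE \<sigma>')"
  proof (rule psubset_card_mono)
    show "finite (downE \<sigma>')" using sub by (rule finite_subset) simp
    show "downE \<sigma> \<subset> downE \<sigma>'" using down k by auto
  qed
  ultimately show ?thesis
    using down by (simp add: progress_measure_def down_upd_nonneg_iff)
qed

lemma astep_exists_if_not_stopped:
  assumes "slack_invariant n \<sigma>" "\<not> stopped n \<sigma>"
  shows "\<exists>l \<sigma>'. astep n \<sigma> l \<sigma>'"
proof (cases "\<exists>k\<in>{1..n}. yv \<sigma> k = 0")
  case True
  then show ?thesis using astep.up[OF True refl] by blast
next
  case no_zero: False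
  let ?y = "yv \<sigma>" and ?P = "{k\<in>{1..n}. 0 < yv \<sigma> k}"
  have finP: "finite ?P" by simp
  have "?P \<noteq> {}" using assms(2) no_zero unfolding stopped_def by force
  define k0 where "k0 = Min ?P"
  have k0: "k0 \<in> ?P" unfolding k0_def using finP \<open>?P \<noteq> {}\<close> by (rule Min_in)
  have "?y i < 0" if "i \<in> {1..<k0}" for i
  proof -
    have "i \<notin> ?P"
    proof
      assume "i \<in> ?P"
      then have "k0 \<le> i" unfolding k0_def by (rule Min_le[OF finP])
      with that show False by simp
    qed
    then show ?thesis using that k0 no_zero by fastforce
  qed
  then have none_below: "{i\<in>{1..<k0}. 0 \<le> ?y i} = {}" by fastforce
  let ?C = "{j\<in>{k0<..n}. (j, k0) \<in> downE \<sigma>}"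
  have "?y k0 + int (card ?C) \<le> int (n - k0) + int (card {i\<in>{1..<k0}. 0 \<le> ?y i})"
    using assms(1) k0 unfolding slack_invariant_def by blast
  then have "int (card ?C) < int (n - k0)" using k0 unfolding none_below by simp
  then have "card ?C < card {k0<..n}" by simp
  then have "?C \<noteq> {k0<..n}" by (metis less_irrefl)
  then obtain j where j: "j \<in> {k0<..n}" "(j, k0) \<notin> downE \<sigma>" by (auto simp: set_eq_iff)
  let ?D = "dcand n ?y (downE \<sigma>)"
  have "j \<in> ?D" unfolding dcand_def using j k0 by auto
  moreover have "finite ?D" unfolding dcand_def by simp
  ultimately have "arg_min_on ?y ?D \<in> ?D" "\<forall>j''\<in>?D. ?y (arg_min_on ?y ?D) \<le> ?y j''"
    using arg_min_if_finite[of ?D ?y] by (auto simp: not_less)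
  moreover have "\<exists>k\<in>{1..n}. 0 < ?y k" using k0 by blast
  ultimately show ?thesis by (metis astep.down[OF no_zero])
qed

subsection \<open>The trace of up feeders\<close>

fun is_up :: "lbl \<Rightarrow> bool" where
  "is_up (Up _) = True" | "is_up (Down _) = False"

definition ups_from :: "lbl list \<Rightarrow> nat \<Rightarrow> nat" where
  "ups_from ls a = length (filter is_up (drop a ls))"

definition feeder_invariant :: "nat \<Rightarrow> lbl list \<Rightarrow> st \<Rightarrow> bool" where
  "feeder_invariant n ls \<sigma> \<longleftrightarrow>
     (\<forall>k\<in>{1..n}. yv \<sigma> k < 0 \<longleftrightarrow> Up k \<in> set ls) \<and> distinct (filter is_up ls)
     \<and> (\<forall>k. Up k \<in> set ls \<longrightarrow> k \<in> {1..n})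
     \<and> (\<forall>a<length ls. \<forall>k. ls ! a = Up k \<longrightarrow> yv \<sigma> k = - int (ups_from ls a))"

lemma ups_from_snoc:
  "a \<le> length ls \<Longrightarrow> ups_from (ls @ [l]) a = ups_from ls a + (if is_up l then 1 else 0)"
  by (simp add: ups_from_def)

lemma ups_from_at_up:
  "a < length ls \<Longrightarrow> is_up (ls ! a) \<Longrightarrow> ups_from ls a = Suc (ups_from ls (Suc a))"
  by (simp add: ups_from_def Cons_nth_drop_Suc[symmetric])

lemma ups_from_antimono:
  assumes "a \<le> b"
  shows "ups_from ls b \<le> ups_from ls a"
proof -
  have "drop a ls = take (b - a) (drop a ls) @ drop b ls"
    using assms by (metis append_take_drop_id drop_drop le_add_diff_inverse2)
  then show ?thesis unfolding ups_from_def by (metis filter_append length_append le_add2)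
qed

lemma ups_from_strict_antimono:
  "a < b \<Longrightarrow> a < length ls \<Longrightarrow> is_up (ls ! a) \<Longrightarrow> ups_from ls b < ups_from ls a"
  using ups_from_at_up[of a ls] ups_from_antimono[of "Suc a" b ls] by simp

lemma feeder_invariant_yv:
  "feeder_invariant n ls \<sigma> \<Longrightarrow> a < length ls \<Longrightarrow> ls ! a = Up k \<Longrightarrow> yv \<sigma> k = - int (ups_from ls a)"
  by (simp add: feeder_invariant_def)

lemma feeder_invariant_init:
  assumes "parking_function xs"
  shows "feeder_invariant (length xs) [] (init_st xs)"
  using parking_function_entry_bounds(1)[OF assms]
  by (fastforce simp: feeder_invariant_def init_st_def)

lemma feeder_invariant_up:
  assumes inv: "feeder_invariant n ls \<sigma>" and j: "j \<in> {1..n}" "yv \<sigma> j = 0"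
  shows "feeder_invariant n (ls @ [Up j]) \<lparr>yv = up_upd n (yv \<sigma>) j, upE = E, downE = downE \<sigma>\<rparr>"
proof -
  let ?y' = "up_upd n (yv \<sigma>) j"
  have "yv \<sigma> j < 0 \<longleftrightarrow> Up j \<in> set ls" using inv j(1) unfolding feeder_invariant_def by blast
  with j(2) have fresh: "Up j \<notin> set ls" by simp
  have "?y' k = - int (ups_from (ls @ [Up j]) a)"
    if a: "a < length (ls @ [Up j])" and k: "(ls @ [Up j]) ! a = Up k" for a k
  proof (cases "a < length ls")
    case True
    then have "Up k \<in> set ls" "ls ! a = Up k" using k by (auto simp: nth_append dest: nth_mem)
    moreover from this have "k \<in> {1..n}" "yv \<sigma> k < 0" "k \<noteq> j"
      using inv fresh unfolding feeder_invariant_def by auto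
    ultimately show ?thesis
      using feeder_invariant_yv[OF inv True] up_upd_neg[of k n j "yv \<sigma>"] ups_from_snoc[of a ls] True
      by simp
  next
    case False
    with a have "a = length ls" by simp
    with k show ?thesis by (simp add: up_upd_feeder ups_from_def)
  qed
  moreover have "?y' k < 0 \<longleftrightarrow> Up k \<in> set (ls @ [Up j])" if "k \<in> {1..n}" for k
    using inv that unfolding feeder_invariant_def not_le[symmetric] up_upd_nonneg_iff by auto
  ultimately show ?thesis using inv fresh j unfolding feeder_invariant_def by auto
qed

lemma feeder_invariant_down:
  assumes inv: "feeder_invariant n ls \<sigma>"
  shows "feeder_invariant n (ls @ [Down j]) \<lparr>yv = down_upd n (yv \<sigma>) j, upE = U, downE = D\<rparr>"
proof -
  have "down_upd n (yv \<sigma>) j k = - int (ups_from (ls @ [Down j]) a)"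
    if a: "a < length (ls @ [Down j])" and k: "(ls @ [Down j]) ! a = Up k" for a k
  proof -
    have a': "a < length ls" using a k by (cases "a < length ls") (auto simp: nth_append)
    then have "ls ! a = Up k" using k by (simp add: nth_append)
    with a' have "yv \<sigma> k = - int (ups_from ls a)" by (rule feeder_invariant_yv[OF inv])
    moreover have "0 < ups_from ls a" using a' \<open>ls ! a = Up k\<close> ups_from_at_up[of a ls] by simp
    ultimately show ?thesis using a' down_upd_neg[of "yv \<sigma>" k n j] ups_from_snoc[of a ls] by simp
  qed
  then show ?thesis
    using inv down_upd_nonneg_iff[of n "yv \<sigma>" j] unfolding feeder_invariant_def not_le[symmetric]
    by auto
qed

lemma astep_feeder_invariant:
  assumes "feeder_invariant n ls \<sigma>" "astep n \<sigma> l \<sigma>'"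
  shows "feeder_invariant n (ls @ [l]) \<sigma>'"
  using assms(2)
proof cases
  case (up j)
  then show ?thesis
    using feeder_invariant_up[OF assms(1)] up_feeder_zero[OF up(3), folded up(4)] by simp
next
  case (down j)
  then show ?thesis using feeder_invariant_down[OF assms(1)] by simp
qed

lemma steps_snocD: "steps n a (ls @ [l]) c \<Longrightarrow> \<exists>b. steps n a ls b \<and> astep n b l c"
proof (induction ls arbitrary: a)
  case Nil
  then show ?case by (auto elim!: steps.cases intro: steps.nil)
next
  case (Cons x ls)
  then obtain b where b: "astep n a x b" "steps n b (ls @ [l]) c" by (auto elim: steps.cases)
  from Cons.IH[OF b(2)] obtain b' where "steps n b ls b'" "astep n b' l c" by blast
  with b(1) show ?case by (auto intro: steps.cons)
qed

lemma steps_feeder_invariant: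
  "steps n \<sigma>\<^sub>0 ls \<sigma> \<Longrightarrow> feeder_invariant n [] \<sigma>\<^sub>0 \<Longrightarrow> feeder_invariant n ls \<sigma>"
proof (induction ls arbitrary: \<sigma> rule: rev_induct)
  case Nil
  then show ?case by (auto elim: steps.cases)
next
  case (snoc l ls)
  then show ?case using steps_snocD astep_feeder_invariant by blast
qed

subsection \<open>The final state\<close>

lemma distinct_filter_nth_eq:
  assumes "distinct (filter P xs)" "a < length xs" "b < length xs" "xs ! a = xs ! b" "P (xs ! a)"
  shows "a = b"
proof -
  have no_repeat: False if "i < j" "j < length xs" "xs ! i = xs ! j" "P (xs ! j)" for i j
  proof -
    have "filter P xs = filter P (take j xs @ xs ! j # drop (Suc j) xs)"
      using id_take_nth_drop[OF that(2)] by (rule arg_cong)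
    also have "\<dots> = filter P (take j xs) @ xs ! j # filter P (drop (Suc j) xs)"
      using that(4) by simp
    finally have "xs ! j \<notin> set (filter P (take j xs))" using assms(1) by simp
    moreover have "xs ! j \<in> set (take j xs)"
      unfolding in_set_conv_nth using that by (intro exI[of _ i]) auto
    ultimately show False using that(4) by simp
  qed
  show ?thesis
    using assms(2-5) no_repeat[of a b] no_repeat[of b a] by (cases a b rule: linorder_cases) auto
qed

context
  fixes n ls \<sigma>
  assumes inv: "feeder_invariant n ls \<sigma>" and stop: "stopped n \<sigma>"
begin

lemma final_up_position:
  assumes "k \<in> {1..n}"
  obtains a where "a < length ls" "ls ! a = Up k" "yv \<sigma> k = - int (ups_from ls a)"
proof -
  have "Up k \<in> set ls" using assms inv stop unfolding feeder_invariant_def stopped_def by blast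
  then obtain a where a: "a < length ls" "ls ! a = Up k" by (auto simp: in_set_conv_nth)
  with that show ?thesis using feeder_invariant_yv[OF inv] by blast
qed

lemma final_up_position_unique:
  "a < length ls \<Longrightarrow> b < length ls \<Longrightarrow> ls ! a = Up k \<Longrightarrow> ls ! b = Up k \<Longrightarrow> a = b"
  using inv distinct_filter_nth_eq[of is_up ls a b] unfolding feeder_invariant_def by simp

lemma final_up_count: "ups_from ls 0 = n"
proof -
  have neg_iff: "\<forall>k\<in>{1..n}. yv \<sigma> k < 0 \<longleftrightarrow> Up k \<in> set ls"
    and dist: "distinct (filter is_up ls)" and range: "\<forall>k. Up k \<in> set ls \<longrightarrow> k \<in> {1..n}"
    using inv unfolding feeder_invariant_def by blast+
  have "set (filter is_up ls) = Up ` {1..n}"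
  proof (intro equalityI subsetI)
    fix l assume l: "l \<in> set (filter is_up ls)"
    then obtain k where "l = Up k" by (cases l rule: lbl.exhaust) auto
    with l range show "l \<in> Up ` {1..n}" by simp
  next
    fix l assume "l \<in> Up ` {1..n}"
    with neg_iff stop show "l \<in> set (filter is_up ls)" unfolding stopped_def by auto
  qed
  moreover have "card (Up ` {1..n}) = n" by (subst card_image) (auto simp: inj_on_def)
  ultimately have "card (set (filter is_up ls)) = n" by simp
  with distinct_card[OF dist] show ?thesis unfolding ups_from_def by simp
qed

lemma final_yv_less_iff:
  assumes a: "a < length ls" "ls ! a = Up i" and b: "b < length ls" "ls ! b = Up j" and "i \<noteq> j"
  shows "yv \<sigma> i < yv \<sigma> j \<longleftrightarrow> a < b"
proof -
  have val: "yv \<sigma> i = - int (ups_from ls a)" "yv \<sigma> j = - int (ups_from ls b)"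
    using feeder_invariant_yv[OF inv] a b by blast+
  show ?thesis
  proof (cases "a < b")
    case True
    then show ?thesis using ups_from_strict_antimono[of a b ls] a val by simp
  next
    case False
    with a b \<open>i \<noteq> j\<close> have "b < a" by (cases "a = b") auto
    then show ?thesis using ups_from_strict_antimono[of b a ls] b val False by simp
  qed
qed

lemma final_up_feeder_once:
  assumes "j \<in> {1..n}"
  shows "card {i. i < length ls \<and> ls ! i = Up j} = 1"
proof -
  obtain a where a: "a < length ls" "ls ! a = Up j" by (rule final_up_position[OF assms]) blast
  then have "{i. i < length ls \<and> ls ! i = Up j} = {a}"
    using final_up_position_unique[OF _ a(1) _ a(2)] by blast
  then show ?thesis by simp
qed

lemma final_yv_bij: "bij_betw (yv \<sigma>) {1..n} {- int n .. -1}"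
proof -
  have "inj_on (yv \<sigma>) {1..n}"
  proof (rule inj_onI, rule ccontr)
    fix i j assume i: "i \<in> {1..n}" and j: "j \<in> {1..n}" and "yv \<sigma> i = yv \<sigma> j" "i \<noteq> j"
    moreover obtain a where a: "a < length ls" "ls ! a = Up i" by (rule final_up_position[OF i]) blast
    moreover obtain b where b: "b < length ls" "ls ! b = Up j" by (rule final_up_position[OF j]) blast
    ultimately have "\<not> a < b" "\<not> b < a"
      using final_yv_less_iff[OF a b] final_yv_less_iff[OF b a] by auto
    then show False using a b \<open>i \<noteq> j\<close> by (simp add: not_less_iff_gr_or_eq)
  qed
  moreover have "yv \<sigma> ` {1..n} \<subseteq> {- int n .. -1}"
  proof
    fix v assume "v \<in> yv \<sigma> ` {1..n}"
    then obtain k a where "a < length ls" "ls ! a = Up k" "v = - int (ups_from ls a)"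
      using final_up_position by blast
    then show "v \<in> {- int n .. -1}"
      using ups_from_at_up[of a ls] ups_from_antimono[of 0 a ls] final_up_count by simp
  qed
  ultimately show ?thesis
    by (simp add: bij_betw_def card_image card_subset_eq)
qed

lemma final_abs_yv_less_iff:
  assumes "i \<in> {1..n}" "j \<in> {1..n}" "i \<noteq> j"
  shows "\<bar>yv \<sigma> j\<bar> < \<bar>yv \<sigma> i\<bar> \<longleftrightarrow> (\<exists>a b. a < b \<and> b < length ls \<and> ls ! a = Up i \<and> ls ! b = Up j)"
proof -
  obtain a where a: "a < length ls" "ls ! a = Up i" by (rule final_up_position[OF assms(1)]) blast
  obtain b where b: "b < length ls" "ls ! b = Up j" by (rule final_up_position[OF assms(2)]) blast
  have "yv \<sigma> i < 0" "yv \<sigma> j < 0" using assms stop unfolding stopped_def by auto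
  then have "\<bar>yv \<sigma> j\<bar> < \<bar>yv \<sigma> i\<bar> \<longleftrightarrow> a < b" using final_yv_less_iff[OF a b assms(3)] by simp
  also have "\<dots> \<longleftrightarrow> (\<exists>a b. a < b \<and> b < length ls \<and> ls ! a = Up i \<and> ls ! b = Up j)"
  proof
    assume "a < b"
    with a b show "\<exists>a b. a < b \<and> b < length ls \<and> ls ! a = Up i \<and> ls ! b = Up j" by blast
  next
    assume "\<exists>a b. a < b \<and> b < length ls \<and> ls ! a = Up i \<and> ls ! b = Up j"
    then obtain a' b' where ab: "a' < b'" "b' < length ls" "ls ! a' = Up i" "ls ! b' = Up j"
      by blast
    have "a' = a" using final_up_position_unique[of a' a i] ab a by simp
    moreover have "b' = b" using final_up_position_unique[of b' b j] ab b by simp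
    ultimately show "a < b" using ab(1) by simp
  qed
  finally show ?thesis .
qed

end

theorem lemma2p4:
  fixes xs :: "nat list"
  defines "n \<equiv> length xs"
  assumes pf: "parking_function xs"
  shows "(\<nexists>f. f 0 = init_st xs \<and> (\<forall>i. \<exists>l. astep n (f i) l (f (Suc i))))
    \<and> (\<forall>ls \<sigma>. steps n (init_st xs) ls \<sigma> \<and> (\<nexists>l \<sigma>'. astep n \<sigma> l \<sigma>') \<longrightarrow> stopped n \<sigma>)
    \<and> (\<forall>ls \<sigma>. steps n (init_st xs) ls \<sigma> \<and> stopped n \<sigma> \<longrightarrow>
          (\<forall>j\<in>{1..n}. card {i. i < length ls \<and> ls ! i = Up j} = 1)
        \<and> bij_betw (yv \<sigma>) {1..n} {- int n .. -1}
        \<and> (\<forall>i\<in>{1..n}. \<forall>j\<in>{1..n}. i \<noteq> j \<longrightarrow>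
             (\<bar>yv \<sigma> i\<bar> > \<bar>yv \<sigma> j\<bar> \<longleftrightarrow>
              (\<exists>a b. a < b \<and> b < length ls \<and> ls ! a = Up i \<and> ls ! b = Up j))))"
proof (intro conjI allI impI notI)
  have slack0: "slack_invariant n (init_st xs)"
    using slack_invariant_init[OF pf] by (simp add: n_def)
  show False if "\<exists>f. f 0 = init_st xs \<and> (\<forall>i. \<exists>l. astep n (f i) l (f (Suc i)))"
  proof -
    from that obtain f where f0: "f 0 = init_st xs" and f: "\<forall>i. \<exists>l. astep n (f i) l (f (Suc i))"
      by blast
    have slack: "slack_invariant n (f i)" for i
    proof (induction i)
      case 0
      then show ?case using slack0 f0 by simp
    next
      case (Suc i)
      obtain l where "astep n (f i) l (f (Suc i))" using f by blast
      then show ?case using Suc.IH by (rule astep_slack_invariant)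
    qed
    have descent: "(f (Suc i), f i) \<in> measure (progress_measure n)" for i
    proof -
      obtain l where "astep n (f i) l (f (Suc i))" using f by blast
      then show ?thesis using slack[of i] unfolding in_measure by (rule astep_progress_measure_less)
    qed
    have "\<nexists>g. \<forall>i. (g (Suc i), g i) \<in> measure (progress_measure n)"
      using wf_measure[of "progress_measure n"] unfolding wf_iff_no_infinite_down_chain .
    with descent show False by blast
  qed
  fix ls \<sigma>
  show "stopped n \<sigma>" if "steps n (init_st xs) ls \<sigma> \<and> (\<nexists>l \<sigma>'. astep n \<sigma> l \<sigma>')"
    using that steps_slack_invariant[OF _ slack0] astep_exists_if_not_stopped by blast
  assume "steps n (init_st xs) ls \<sigma> \<and> stopped n \<sigma>"
  then have inv: "feeder_invariant n ls \<sigma>" and stop: "stopped n \<sigma>"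
    using steps_feeder_invariant feeder_invariant_init[OF pf] by (auto simp: n_def)
  show "\<forall>j\<in>{1..n}. card {i. i < length ls \<and> ls ! i = Up j} = 1"
    using final_up_feeder_once[OF inv stop] by blast
  show "bij_betw (yv \<sigma>) {1..n} {- int n .. -1}" using final_yv_bij[OF inv stop] .
  show "\<forall>i\<in>{1..n}. \<forall>j\<in>{1..n}. i \<noteq> j \<longrightarrow> (\<bar>yv \<sigma> i\<bar> > \<bar>yv \<sigma> j\<bar> \<longleftrightarrow>
          (\<exists>a b. a < b \<and> b < length ls \<and> ls ! a = Up i \<and> ls ! b = Up j))"
    using final_abs_yv_less_iff[OF inv stop] by blast
qed

end
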